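(* Let $p$ be a stochastic choice function rationalized by an MSC $\langle Q,\nu\rangle$. For every $M\in\mathcal N$ and distinct $i,j\in M$ with $p(i,\{i,j\})\in(0,1)$, $$\frac{\delta_{ij}(M)\,q_{ij}(M)}{p(j,\{i,j\})}=-\frac{\delta_{ji}(M)\,q_{ji}(M)}{p(i,\{i,j\})}.$$
   Context: $X$ is a finite set of alternatives; a menu is a nonempty subset of $X$, and $\mathcal N$ denotes the set of all menus. A stochastic choice function is a map $p:X\times\mathcal N\to[0,1]$ with $\sum_{i\in M}p(i,M)=1$ and $p(i,M)=0$ for $i\notin M$; $p(\cdot,M)$ denotes the row vector $(p(i,M))_{i\in M}$. For $M\in\mathcal N$ and $i,j\in M$ let $\delta_{ij}(M)=p(i,M)\,p(j,\{i,j\})-p(i,\{i,j\})\,p(j,M)$. An MSC (Markov stochastic choice model) $\langle Q,\nu\rangle$ consists of, for every menu $M$, a matrix $Q(M)=(q_{ij}(M))_{i,j\in M}$ with nonnegative entries and a probability distribution $\nu_M$ on $M$, such that for all $M\in\mathcal N$ and distinct $i,j\in M$: (A1) $q_{ii}(M)=1-\sum_{k\neq i}q_{ik}(M)>0$; (A2) if $q_{ij}(\{i,j\})=0$ then $q_{ji}(\{i,j\})>0$; (A3) $q_{ij}(\{i,j\})\,q_{ji}(M)=q_{ji}(\{i,j\})\,q_{ij}(M)$. For a right stochastic matrix $Q$ on $M$ and a distribution $\nu$ on $M$ define $\rho(\nu,Q)=\lim_{\alpha\to0^+}\sum_{t\ge0}\alpha(1-\alpha)^t\nu Q^t$ (the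 limit exists and satisfies $\rho(\nu,Q)(I-Q)=0$). $p$ is rationalized by the MSC $\langle Q,\nu\rangle$ if $p(\cdot,M)=\rho(\nu_M,Q(M))$ for every $M\in\mathcal N$. *)

theory Defs
  imports "HOL-Analysis.Analysis"
begin

definition menu :: "'a::finite set \<Rightarrow> bool" where
  "menu M \<longleftrightarrow> M \<noteq> {}"

definition stoch_choice :: "('a::finite \<Rightarrow> 'a set \<Rightarrow> real) \<Rightarrow> bool" where
  "stoch_choice p \<longleftrightarrow> (\<forall>M. menu M \<longrightarrow>
      (\<forall>i. 0 \<le> p i M \<and> p i M \<le> 1) \<and>
      (\<Sum>i\<in>M. p i M) = 1 \<and>
      (\<forall>i. i \<notin> M \<longrightarrow> p i M = 0))"

definition delta :: "('a \<Rightarrow> 'a set \<Rightarrow> real) \<Rightarrow> 'a set \<Rightarrow> 'a \<Rightarrow> 'a \<Rightarrow> real" where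
  "delta p M i j = p i M * p j {i, j} - p i {i, j} * p j M"

fun mpow :: "'a set \<Rightarrow> ('a \<Rightarrow> 'a \<Rightarrow> real) \<Rightarrow> nat \<Rightarrow> 'a \<Rightarrow> 'a \<Rightarrow> real" where
  "mpow M Q 0 i j = (if i = j then 1 else 0)"
| "mpow M Q (Suc t) i j = (\<Sum>k\<in>M. mpow M Q t i k * Q k j)"

definition vpow :: "'a set \<Rightarrow> ('a \<Rightarrow> real) \<Rightarrow> ('a \<Rightarrow> 'a \<Rightarrow> real) \<Rightarrow> nat \<Rightarrow> 'a \<Rightarrow> real" where
  "vpow M \<nu> Q t j = (\<Sum>i\<in>M. \<nu> i * mpow M Q t i j)"

(* An MSC <Q,\<nu>>: Q M i j = q_ij(M), \<nu> M i = \<nu>_M(i) *)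
definition MSC :: "('a::finite set \<Rightarrow> 'a \<Rightarrow> 'a \<Rightarrow> real) \<Rightarrow> ('a set \<Rightarrow> 'a \<Rightarrow> real) \<Rightarrow> bool" where
  "MSC Q \<nu> \<longleftrightarrow> (\<forall>M. menu M \<longrightarrow>
      (\<forall>i\<in>M. \<forall>j\<in>M. 0 \<le> Q M i j) \<and>
      (\<forall>i\<in>M. 0 \<le> \<nu> M i) \<and> (\<Sum>i\<in>M. \<nu> M i) = 1 \<and>
      (\<forall>i\<in>M. Q M i i = 1 - (\<Sum>k\<in>M - {i}. Q M i k) \<and> Q M i i > 0) \<and>
      (\<forall>i\<in>M. \<forall>j\<in>M. i \<noteq> j \<longrightarrow>
          (Q {i, j} i j = 0 \<longrightarrow> Q {i, j} j i > 0) \<and>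
          Q {i, j} i j * Q M j i = Q {i, j} j i * Q M i j))"

definition rationalized_by ::
  "('a::finite \<Rightarrow> 'a set \<Rightarrow> real) \<Rightarrow> ('a set \<Rightarrow> 'a \<Rightarrow> 'a \<Rightarrow> real) \<Rightarrow> ('a set \<Rightarrow> 'a \<Rightarrow> real) \<Rightarrow> bool" where
  "rationalized_by p Q \<nu> \<longleftrightarrow> (\<forall>M. menu M \<longrightarrow> (\<forall>j\<in>M.
      ((\<lambda>\<alpha>. \<Sum>t. \<alpha> * (1 - \<alpha>) ^ t * vpow M (\<nu> M) (Q M) t j) \<longlongrightarrow> p j M) (at_right 0)))"

end

theory Submission
  imports Defs
begin

(* On the two-element menu {i,j} the Markov chain is a two-state chain, and its stationary
   distribution p(.,{i,j}) satisfies detailed balance p_i q_ij({i,j}) = p_j q_ji({i,j}).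
   Axiom (A3) transfers the ratio q_ij/q_ji from {i,j} to M, so p_i q_ij(M) = p_j q_ji(M)
   (here (A2) and 0 < p_i < 1 ensure q_ij({i,j}) > 0). Since delta_ji(M) = -delta_ij(M),
   dividing by p_i p_j gives the identity. *)

definition stochastic_on :: "'a set \<Rightarrow> ('a \<Rightarrow> 'a \<Rightarrow> real) \<Rightarrow> bool" where
  "stochastic_on M Q \<longleftrightarrow> (\<forall>k\<in>M. \<forall>j\<in>M. 0 \<le> Q k j) \<and> (\<forall>k\<in>M. (\<Sum>j\<in>M. Q k j) = 1)"

definition distribution_on :: "'a set \<Rightarrow> ('a \<Rightarrow> real) \<Rightarrow> bool" where
  "distribution_on M \<nu> \<longleftrightarrow> (\<forall>k\<in>M. 0 \<le> \<nu> k) \<and> (\<Sum>k\<in>M. \<nu> k) = 1"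

lemma distribution_on_bounds:
  assumes "finite M" "distribution_on M \<nu>" "j \<in> M"
  shows "0 \<le> \<nu> j \<and> \<nu> j \<le> 1"
proof -
  have "\<nu> j \<le> (\<Sum>k\<in>M. \<nu> k)"
    using assms by (intro member_le_sum) (auto simp: distribution_on_def)
  then show ?thesis
    using assms by (auto simp: distribution_on_def)
qed

lemma vpow_0: "finite M \<Longrightarrow> j \<in> M \<Longrightarrow> vpow M \<nu> Q 0 j = \<nu> j"
  unfolding vpow_def by (simp add: if_distrib cong: if_cong)

lemma vpow_Suc: "vpow M \<nu> Q (Suc t) j = (\<Sum>k\<in>M. vpow M \<nu> Q t k * Q k j)"
proof -
  have "vpow M \<nu> Q (Suc t) j = (\<Sum>i\<in>M. \<Sum>k\<in>M. \<nu> i * mpow M Q t i k * Q k j)"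
    unfolding vpow_def by (simp add: sum_distrib_left mult.assoc)
  also have "\<dots> = (\<Sum>k\<in>M. \<Sum>i\<in>M. \<nu> i * mpow M Q t i k * Q k j)"
    by (rule sum.swap)
  also have "\<dots> = (\<Sum>k\<in>M. vpow M \<nu> Q t k * Q k j)"
    unfolding vpow_def by (simp add: sum_distrib_right)
  finally show ?thesis .
qed

lemma distribution_on_vpow:
  assumes "finite M" "stochastic_on M Q" "distribution_on M \<nu>"
  shows "distribution_on M (vpow M \<nu> Q t)"
proof (induction t)
  case 0
  then show ?case using assms by (simp add: vpow_0 distribution_on_def)
next
  case (Suc t)
  have "(\<Sum>j\<in>M. vpow M \<nu> Q (Suc t) j) = (\<Sum>k\<in>M. vpow M \<nu> Q t k * (\<Sum>j\<in>M. Q k j))"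
    unfolding vpow_Suc by (subst sum.swap) (simp add: sum_distrib_left)
  also have "\<dots> = 1"
    using Suc assms(2) by (simp add: distribution_on_def stochastic_on_def)
  finally show ?case
    using Suc assms(2)
    by (auto simp: distribution_on_def stochastic_on_def vpow_Suc intro!: sum_nonneg)
qed

lemma summable_geometric_weighted:
  fixes f :: "nat \<Rightarrow> real"
  assumes "0 < \<alpha>" "\<alpha> < 1" "\<And>t. \<bar>f t\<bar> \<le> B"
  shows "summable (\<lambda>t. \<alpha> * (1 - \<alpha>) ^ t * f t)"
proof (rule summable_comparison_test)
  show "\<exists>N. \<forall>t\<ge>N. norm (\<alpha> * (1 - \<alpha>) ^ t * f t) \<le> B * (\<alpha> * (1 - \<alpha>) ^ t)"
    using assms by (intro exI[of _ 0] allI impI) (simp add: abs_mult mult_left_mono mult.commute)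
  show "summable (\<lambda>t. B * (\<alpha> * (1 - \<alpha>) ^ t))"
    using assms by (intro summable_mult summable_geometric) auto
qed

lemma abel_sum_shift:
  fixes f :: "nat \<Rightarrow> real"
  assumes "0 < \<alpha>" "\<alpha> < 1" and sf: "summable (\<lambda>t. \<alpha> * (1 - \<alpha>) ^ t * f t)"
  shows "(1 - \<alpha>) * (\<Sum>t. \<alpha> * (1 - \<alpha>) ^ t * f (Suc t))
           = (\<Sum>t. \<alpha> * (1 - \<alpha>) ^ t * f t) - \<alpha> * f 0"
proof -
  have shifted: "(\<lambda>t. (1 - \<alpha>) * (\<alpha> * (1 - \<alpha>) ^ t * f (Suc t)))
                   = (\<lambda>t. \<alpha> * (1 - \<alpha>) ^ Suc t * f (Suc t))"
    by (simp add: algebra_simps)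
  have "summable (\<lambda>t. (1 - \<alpha>) * (\<alpha> * (1 - \<alpha>) ^ t * f (Suc t)))"
    unfolding shifted using sf by (subst summable_Suc_iff)
  then have "summable (\<lambda>t. \<alpha> * (1 - \<alpha>) ^ t * f (Suc t))"
    using assms(2) by (simp only: summable_cmult_iff) auto
  then have "(1 - \<alpha>) * (\<Sum>t. \<alpha> * (1 - \<alpha>) ^ t * f (Suc t))
               = (\<Sum>t. \<alpha> * (1 - \<alpha>) ^ Suc t * f (Suc t))"
    by (simp add: suminf_mult[symmetric] shifted)
  also have "\<dots> = (\<Sum>t. \<alpha> * (1 - \<alpha>) ^ t * f t) - \<alpha> * f 0"
    using suminf_split_head[OF sf] by simp
  finally show ?thesis .
qed

(* The Abel limit rho(nu,Q) is stationary: letting alpha tend to 0 in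
   (1 - alpha) S_alpha Q = S_alpha - alpha nu, where S_alpha = sum_t alpha (1-alpha)^t nu Q^t. *)
lemma abel_limit_stationary:
  assumes fin: "finite M" and Q: "stochastic_on M Q" and \<nu>: "distribution_on M \<nu>"
    and lim: "\<And>k. k \<in> M \<Longrightarrow> ((\<lambda>\<alpha>. \<Sum>t. \<alpha> * (1 - \<alpha>) ^ t * vpow M \<nu> Q t k) \<longlongrightarrow> P k) (at_right 0)"
    and j: "j \<in> M"
  shows "P j = (\<Sum>k\<in>M. P k * Q k j)"
proof -
  define S where "S \<alpha> k = (\<Sum>t. \<alpha> * (1 - \<alpha>) ^ t * vpow M \<nu> Q t k)" for \<alpha> k
  have summ: "summable (\<lambda>t. \<alpha> * (1 - \<alpha>) ^ t * vpow M \<nu> Q t k)"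
    if "0 < \<alpha>" "\<alpha> < 1" "k \<in> M" for \<alpha> k
    using distribution_on_bounds[OF fin distribution_on_vpow[OF fin Q \<nu>] that(3)] that
    by (intro summable_geometric_weighted[where B = 1]) auto
  have step: "(1 - \<alpha>) * (\<Sum>k\<in>M. S \<alpha> k * Q k j) = S \<alpha> j - \<alpha> * vpow M \<nu> Q 0 j"
    if "0 < \<alpha>" "\<alpha> < 1" for \<alpha>
  proof -
    have "(\<Sum>k\<in>M. S \<alpha> k * Q k j) = (\<Sum>k\<in>M. \<Sum>t. \<alpha> * (1 - \<alpha>) ^ t * vpow M \<nu> Q t k * Q k j)"
      unfolding S_def using summ[OF that] by (intro sum.cong refl suminf_mult2) auto
    also have "\<dots> = (\<Sum>t. \<Sum>k\<in>M. \<alpha> * (1 - \<alpha>) ^ t * vpow M \<nu> Q t k * Q k j)"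
      using summ[OF that] by (intro suminf_sum[symmetric] summable_mult2) auto
    also have "\<dots> = (\<Sum>t. \<alpha> * (1 - \<alpha>) ^ t * vpow M \<nu> Q (Suc t) j)"
      by (simp add: vpow_Suc sum_distrib_left mult.assoc)
    finally show ?thesis
      using abel_sum_shift[OF that summ[OF that j]] by (simp add: S_def)
  qed
  have "((\<lambda>\<alpha>. (1 - \<alpha>) * (\<Sum>k\<in>M. S \<alpha> k * Q k j)) \<longlongrightarrow> (1 - 0) * (\<Sum>k\<in>M. P k * Q k j)) (at_right 0)"
    unfolding S_def by (intro tendsto_intros lim) auto
  moreover have "eventually (\<lambda>\<alpha>. (1 - \<alpha>) * (\<Sum>k\<in>M. S \<alpha> k * Q k j) = S \<alpha> j - \<alpha> * vpow M \<nu> Q 0 j)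
                   (at_right (0::real))"
    by (rule eventually_mono[OF eventually_at_right_real[of 0 1]]) (use step in auto)
  ultimately have "((\<lambda>\<alpha>. S \<alpha> j - \<alpha> * vpow M \<nu> Q 0 j) \<longlongrightarrow> (\<Sum>k\<in>M. P k * Q k j)) (at_right 0)"
    by (simp add: tendsto_cong)
  moreover have "((\<lambda>\<alpha>. S \<alpha> j - \<alpha> * vpow M \<nu> Q 0 j) \<longlongrightarrow> P j - 0 * vpow M \<nu> Q 0 j) (at_right 0)"
    unfolding S_def by (intro tendsto_intros lim j)
  ultimately show ?thesis
    using tendsto_unique[OF trivial_limit_at_right_real] by fastforce
qed

lemma two_state_detailed_balance:
  assumes "i \<noteq> j" "stochastic_on {i, j} Q"
    and "P i = (\<Sum>k\<in>{i, j}. P k * Q k i)"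
  shows "P i * Q i j = P j * Q j i"
proof -
  have "Q i i = 1 - Q i j"
    using assms(1,2) by (simp add: stochastic_on_def)
  then have "P i = P i * (1 - Q i j) + P j * Q j i"
    using assms(1,3) by simp
  then show ?thesis
    by (simp add: algebra_simps)
qed

lemma MSC_stochastic_on:
  assumes "MSC Q \<nu>" "menu M"
  shows "stochastic_on M (Q M)"
proof -
  note msc = assms(1)[unfolded MSC_def, rule_format, OF assms(2)]
  have nonneg: "\<forall>k\<in>M. \<forall>j\<in>M. 0 \<le> Q M k j"
    using msc by (rule conjunct1)
  have "(\<Sum>j\<in>M. Q M k j) = 1" if k: "k \<in> M" for k
  proof -
    have "Q M k k = 1 - (\<Sum>j\<in>M - {k}. Q M k j)"
      using msc k by (elim conjE) (drule bspec, assumption, elim conjE)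
    then show ?thesis
      using sum.remove[OF finite k, of "Q M k"] by linarith
  qed
  then show ?thesis
    using nonneg by (simp add: stochastic_on_def)
qed

lemma MSC_distribution_on:
  assumes "MSC Q \<nu>" "menu M"
  shows "distribution_on M (\<nu> M)"
  using assms(1)[unfolded MSC_def, rule_format, OF assms(2)] unfolding distribution_on_def
  by (elim conjE) (intro conjI; assumption)

lemma MSC_pair_reachable:
  "MSC Q \<nu> \<Longrightarrow> menu M \<Longrightarrow> i \<in> M \<Longrightarrow> j \<in> M \<Longrightarrow> i \<noteq> j \<Longrightarrow>
     Q {i, j} i j = 0 \<Longrightarrow> 0 < Q {i, j} j i"
  unfolding MSC_def by blast

lemma MSC_ratio_consistent:
  "MSC Q \<nu> \<Longrightarrow> menu M \<Longrightarrow> i \<in> M \<Longrightarrow> j \<in> M \<Longrightarrow> i \<noteq> j \<Longrightarrow>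
     Q {i, j} i j * Q M j i = Q {i, j} j i * Q M i j"
  unfolding MSC_def by blast

lemma rationalized_by_stationary:
  assumes "MSC Q \<nu>" "rationalized_by p Q \<nu>" "menu M" "j \<in> M"
  shows "p j M = (\<Sum>k\<in>M. p k M * Q M k j)"
  using assms
  by (intro abel_limit_stationary[OF finite MSC_stochastic_on MSC_distribution_on])
     (auto simp: rationalized_by_def)

lemma stoch_choice_pair:
  assumes "stoch_choice p" "i \<noteq> j"
  shows "p i {i, j} + p j {i, j} = 1"
proof -
  have "(\<Sum>k\<in>{i, j}. p k {i, j}) = 1"
    using assms(1)[unfolded stoch_choice_def, rule_format, of "{i, j}"]
    by (simp add: menu_def)
  then show ?thesis
    using assms(2) by simp
qed

lemma delta_swap: "delta p M j i = - delta p M i j"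
  unfolding delta_def by (simp add: insert_commute algebra_simps)

lemma rationalized_by_balance:
  assumes "stoch_choice p" "MSC Q \<nu>" "rationalized_by p Q \<nu>"
    and "menu M" "i \<in> M" "j \<in> M" "i \<noteq> j"
    and "0 < p i {i, j}" "p i {i, j} < 1"
  shows "p i {i, j} * Q M i j = p j {i, j} * Q M j i"
proof -
  let ?N = "{i, j}"
  have pair: "menu ?N" "i \<in> ?N"
    by (auto simp: menu_def)
  have balance: "p i ?N * Q ?N i j = p j ?N * Q ?N j i"
    using assms(7) MSC_stochastic_on[OF assms(2) pair(1)]
      rationalized_by_stationary[OF assms(2,3) pair]
    by (rule two_state_detailed_balance)
  have pj: "0 < p j ?N"
    using stoch_choice_pair[OF assms(1,7)] assms(9) by linarith
  have "Q ?N i j \<noteq> 0"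
  proof
    assume "Q ?N i j = 0"
    then have "0 < p j ?N * Q ?N j i"
      using MSC_pair_reachable[OF assms(2,4-7)] pj by simp
    then show False
      using balance \<open>Q ?N i j = 0\<close> by auto
  qed
  moreover have "Q ?N i j * (p i ?N * Q M i j) = Q ?N i j * (p j ?N * Q M j i)"
  proof -
    have "Q ?N i j * (p i ?N * Q M i j) = (p i ?N * Q ?N i j) * Q M i j"
      by (simp only: mult_ac)
    also have "\<dots> = p j ?N * (Q ?N j i * Q M i j)"
      unfolding balance by (simp only: mult.assoc)
    also have "\<dots> = p j ?N * (Q ?N i j * Q M j i)"
      unfolding MSC_ratio_consistent[OF assms(2,4-7)] ..
    also have "\<dots> = Q ?N i j * (p j ?N * Q M j i)"
      by (simp only: mult_ac)
    finally show ?thesis .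
  qed
  ultimately show ?thesis
    by (rule mult_left_cancel[THEN iffD1])
qed

theorem lemmaA2:
  fixes p :: "'a::finite \<Rightarrow> 'a set \<Rightarrow> real"
    and Q :: "'a set \<Rightarrow> 'a \<Rightarrow> 'a \<Rightarrow> real"
    and \<nu> :: "'a set \<Rightarrow> 'a \<Rightarrow> real"
  assumes "stoch_choice p" and "MSC Q \<nu>" and "rationalized_by p Q \<nu>"
    and "menu M" and "i \<in> M" and "j \<in> M" and "i \<noteq> j"
    and "0 < p i {i, j}" and "p i {i, j} < 1"
  shows "delta p M i j * Q M i j / p j {i, j} = - (delta p M j i * Q M j i / p i {i, j})"
proof -
  have balance: "p i {i, j} * Q M i j = p j {i, j} * Q M j i"
    using rationalized_by_balance[OF assms] .
  have "0 < p j {i, j}"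
    using stoch_choice_pair[OF assms(1,7)] assms(9) by linarith
  then have "Q M i j / p j {i, j} = Q M j i / p i {i, j}"
    using balance assms(8) by (simp add: frac_eq_eq mult.commute)
  then have "delta p M i j * Q M i j / p j {i, j} = delta p M i j * (Q M j i / p i {i, j})"
    by (metis times_divide_eq_right)
  then show ?thesis
    by (subst delta_swap) simp
qed

end
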